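(* Let $(\mathcal{P},\cdot)$ be a finite-dimensional admissible Poisson algebra. Its nilradical $\mathcal{N}(\mathcal{P})$ (the unique maximal two-sided ideal of $(\mathcal{P},\cdot)$ consisting of nilpotent elements) coincides with the largest Lie ideal of $\mathfrak{g}_{\mathcal{P}}$ contained in the Jacobson radical $\mathcal{J}(\mathcal{A}_{\mathcal{P}})$ of the commutative associative algebra $\mathcal{A}_{\mathcal{P}}$.
   Context: $\mathbb{K}$ is a field of characteristic different from $2$ and $3$. Associator: $A(X,Y,Z)=(X\cdot Y)\cdot Z-X\cdot(Y\cdot Z)$. An admissible Poisson algebra is a $\mathbb{K}$-vector space $\mathcal{P}$ with a bilinear product $\cdot$ satisfying $3A(X,Y,Z)=(X\cdot Z)\cdot Y+(Y\cdot Z)\cdot X-(Y\cdot X)\cdot Z-(Z\cdot X)\cdot Y$ for all $X,Y,Z$. Its bracket $\{X,Y\}=\frac12(X\cdot Y-Y\cdot X)$ is a Lie bracket and its symmetrized product $X\bullet Y=\frac12(X\cdot Y+Y\cdot X)$ is commutative and associative; $\mathfrak{g}_{\mathcal{P}}=(\mathcal{P},\{\,,\,\})$, $\mathcal{A}_{\mathcal{P}}=(\mathcal{P},\bullet)$. Powers: $X^1=X$, $X^{i+1}=X\cdot X^i$; $X$ is nilpotent if $X^r=0$ for some $r$. *)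

theory Defs
  imports Complex_Main
begin

text \<open>An algebra over a field 'k is modelled as a type 'v with an additive group
structure, a scalar multiplication scale, and a bilinear product mult.\<close>

definition bilinear_prod :: "('k::field \<Rightarrow> 'v::ab_group_add \<Rightarrow> 'v) \<Rightarrow> ('v \<Rightarrow> 'v \<Rightarrow> 'v) \<Rightarrow> bool" where
  "bilinear_prod scale mult \<longleftrightarrow>
     (\<forall>x. Vector_Spaces.linear scale scale (mult x)) \<and>
     (\<forall>y. Vector_Spaces.linear scale scale (\<lambda>x. mult x y))"

definition fin_dim :: "('k::field \<Rightarrow> 'v::ab_group_add \<Rightarrow> 'v) \<Rightarrow> bool" where
  "fin_dim scale \<longleftrightarrow> (\<exists>B. finite B \<and> module.span scale B = UNIV)"

definition assoc :: "('v::ab_group_add \<Rightarrow> 'v \<Rightarrow> 'v) \<Rightarrow> 'v \<Rightarrow> 'v \<Rightarrow> 'v \<Rightarrow> 'v" where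
  "assoc mult x y z = mult (mult x y) z - mult x (mult y z)"

definition admissible_poisson :: "('k::field \<Rightarrow> 'v::ab_group_add \<Rightarrow> 'v) \<Rightarrow> ('v \<Rightarrow> 'v \<Rightarrow> 'v) \<Rightarrow> bool" where
  "admissible_poisson scale mult \<longleftrightarrow>
     (\<forall>x y z. scale 3 (assoc mult x y z) =
        mult (mult x z) y + mult (mult y z) x - mult (mult y x) z - mult (mult z x) y)"

definition pbracket :: "('k::field \<Rightarrow> 'v::ab_group_add \<Rightarrow> 'v) \<Rightarrow> ('v \<Rightarrow> 'v \<Rightarrow> 'v) \<Rightarrow> 'v \<Rightarrow> 'v \<Rightarrow> 'v" where
  "pbracket scale mult x y = scale (1/2) (mult x y - mult y x)"

definition sprod :: "('k::field \<Rightarrow> 'v::ab_group_add \<Rightarrow> 'v) \<Rightarrow> ('v \<Rightarrow> 'v \<Rightarrow> 'v) \<Rightarrow> 'v \<Rightarrow> 'v \<Rightarrow> 'v" where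
  "sprod scale mult x y = scale (1/2) (mult x y + mult y x)"

text \<open>Powers: lpow mult x n = X^(n+1), with X^1 = X and X^(i+1) = X \<cdot> X^i.\<close>
fun lpow :: "('v \<Rightarrow> 'v \<Rightarrow> 'v) \<Rightarrow> 'v \<Rightarrow> nat \<Rightarrow> 'v" where
  "lpow mult x 0 = x"
| "lpow mult x (Suc n) = mult x (lpow mult x n)"

definition nilpotent_elem :: "('v::zero \<Rightarrow> 'v \<Rightarrow> 'v) \<Rightarrow> 'v \<Rightarrow> bool" where
  "nilpotent_elem mult x \<longleftrightarrow> (\<exists>n. lpow mult x n = 0)"

definition two_sided_ideal :: "('k::field \<Rightarrow> 'v::ab_group_add \<Rightarrow> 'v) \<Rightarrow> ('v \<Rightarrow> 'v \<Rightarrow> 'v) \<Rightarrow> 'v set \<Rightarrow> bool" where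
  "two_sided_ideal scale m I \<longleftrightarrow> module.subspace scale I \<and>
     (\<forall>x. \<forall>a\<in>I. m x a \<in> I \<and> m a x \<in> I)"

definition nil_ideal :: "('k::field \<Rightarrow> 'v::ab_group_add \<Rightarrow> 'v) \<Rightarrow> ('v \<Rightarrow> 'v \<Rightarrow> 'v) \<Rightarrow> 'v set \<Rightarrow> bool" where
  "nil_ideal scale mult I \<longleftrightarrow> two_sided_ideal scale mult I \<and> (\<forall>a\<in>I. nilpotent_elem mult a)"

definition is_nilradical :: "('k::field \<Rightarrow> 'v::ab_group_add \<Rightarrow> 'v) \<Rightarrow> ('v \<Rightarrow> 'v \<Rightarrow> 'v) \<Rightarrow> 'v set \<Rightarrow> bool" where
  "is_nilradical scale mult N \<longleftrightarrow> nil_ideal scale mult N \<and>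
     (\<forall>I. nil_ideal scale mult I \<longrightarrow> I \<subseteq> N)"

text \<open>Jacobson radical of a commutative associative (possibly non-unital) algebra with
product p: the largest quasi-regular ideal, i.e. the union (= sum) of all ideals all of whose
elements are quasi-regular (y quasi-regular iff y + z - yz = 0 = y + z - zy for some z).\<close>
definition quasi_regular :: "('v::ab_group_add \<Rightarrow> 'v \<Rightarrow> 'v) \<Rightarrow> 'v \<Rightarrow> bool" where
  "quasi_regular p y \<longleftrightarrow> (\<exists>z. y + z - p y z = 0 \<and> y + z - p z y = 0)"

definition jacobson_radical :: "('k::field \<Rightarrow> 'v::ab_group_add \<Rightarrow> 'v) \<Rightarrow> ('v \<Rightarrow> 'v \<Rightarrow> 'v) \<Rightarrow> 'v set" where
  "jacobson_radical scale p =
     \<Union>{I. two_sided_ideal scale p I \<and> (\<forall>y\<in>I. quasi_regular p y)}"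

definition lie_ideal :: "('k::field \<Rightarrow> 'v::ab_group_add \<Rightarrow> 'v) \<Rightarrow> ('v \<Rightarrow> 'v \<Rightarrow> 'v) \<Rightarrow> 'v set \<Rightarrow> bool" where
  "lie_ideal scale b I \<longleftrightarrow> module.subspace scale I \<and> (\<forall>x. \<forall>a\<in>I. b x a \<in> I)"

definition largest_lie_ideal_in :: "('k::field \<Rightarrow> 'v::ab_group_add \<Rightarrow> 'v) \<Rightarrow> ('v \<Rightarrow> 'v \<Rightarrow> 'v) \<Rightarrow> 'v set \<Rightarrow> 'v set \<Rightarrow> bool" where
  "largest_lie_ideal_in scale b J L \<longleftrightarrow> lie_ideal scale b L \<and> L \<subseteq> J \<and>
     (\<forall>I. lie_ideal scale b I \<and> I \<subseteq> J \<longrightarrow> I \<subseteq> L)"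

end

theory Submission imports Defs begin

text \<open>Admissibility makes the symmetrized product commutative and associative and the
bracket a derivation of it (Leibniz rule); moreover powers for the original product and
for the symmetrized one agree, so nilpotency means the same for both. A two-sided ideal
of the original product is thus the same as a subspace that is an ideal for both the
symmetrized product and the bracket. Nilpotent elements are quasi-regular, so a nil ideal
lies in the Jacobson radical J and, being a Lie ideal, in the largest Lie ideal L inside J.
Conversely, by the Leibniz rule L plus its products with the whole algebra is again a Lie
ideal in J, hence equals L; so L is a two-sided ideal. Finally, in finite dimension every
element y of J is nilpotent: some power y^m lies in the span of the higher powers, so
y^m = y^m w with w in J, and quasi-regularity of w forces y^m = 0.\<close>

context vector_space
begin

lemma fin_dim_ex_mem_span_tail:
  fixes f :: "nat \<Rightarrow> 'b"
  assumes "fin_dim scale"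
  shows "\<exists>m. f m \<in> span (f ` {m<..})"
proof -
  obtain B where B: "finite B" "span B = UNIV"
    using assms unfolding fin_dim_def by blast
  obtain B' where B': "B' \<subseteq> B" "independent B'" "B \<subseteq> span B'"
    using maximal_independent_subset[of B] by blast
  have "span B' = UNIV"
    using B(2) span_minimal[OF B'(3)] by auto
  then interpret F: finite_dimensional_vector_space scale B'
    by unfold_locales (use B B' finite_subset in auto)
  show ?thesis
  proof (rule ccontr)
    assume none: "\<nexists>m. f m \<in> span (f ` {m<..})"
    have step: "dim (f ` {m..}) = Suc (dim (f ` {Suc m..}))" for m
    proof -
      have "{m..} = insert m {Suc m..}"
        by auto
      then have "f ` {m..} = insert (f m) (f ` {Suc m..})"
        by simp
      moreover have "f m \<notin> span (f ` {Suc m..})"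
        using none by (simp add: atLeast_Suc_greaterThan)
      ultimately show ?thesis by (simp add: F.dim_insert)
    qed
    have "dim (f ` {0..}) = dim (f ` {n..}) + n" for n
    proof (induction n)
      case (Suc n)
      then show ?case
        using step[of n] by simp
    qed simp
    then have "dim (f ` {0..}) \<ge> Suc F.dimension"
      by (metis le_add2)
    then show False
      using F.dim_subset_UNIV[of "f ` {0..}"] by simp
  qed
qed

lemma lie_ideal_span:
  assumes b: "\<And>x. module_hom scale scale (b x)" and G: "\<And>x. b x ` G \<subseteq> span G"
  shows "lie_ideal scale b (span G)"
proof -
  have "b x ` span G \<subseteq> span G" for x
    using span_minimal[OF G[of x]] by (simp add: module_hom.span_image[OF b])
  then show ?thesis
    unfolding lie_ideal_def by auto
qed

lemma largest_lie_ideal_in_exists: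
  assumes b: "\<And>x. module_hom scale scale (b x)" and J: "subspace J"
  shows "\<exists>L. largest_lie_ideal_in scale b J L"
proof -
  let ?U = "\<Union>{I. lie_ideal scale b I \<and> I \<subseteq> J}"
  have "b x ` ?U \<subseteq> span ?U" for x
    using span_superset[of ?U] unfolding lie_ideal_def by blast
  then have "lie_ideal scale b (span ?U)"
    by (rule lie_ideal_span[OF b])
  moreover have "span ?U \<subseteq> J"
    by (rule span_minimal[OF _ J]) blast
  moreover have "I \<subseteq> span ?U" if "lie_ideal scale b I" "I \<subseteq> J" for I
    using that span_superset[of ?U] by blast
  ultimately show ?thesis
    unfolding largest_lie_ideal_in_def by blast
qed

end

locale bilinear_algebra = vector_space scale
  for scale :: "'k::field \<Rightarrow> 'v::ab_group_add \<Rightarrow> 'v" +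
  fixes mult :: "'v \<Rightarrow> 'v \<Rightarrow> 'v"
  assumes bilinear: "bilinear_prod scale mult"
begin

lemma module_hom_mult_left: "module_hom scale scale (mult x)"
  using bilinear by (simp add: bilinear_prod_def module_hom_iff_linear)

lemma module_hom_mult_right: "module_hom scale scale (\<lambda>a. mult a y)"
  using bilinear by (simp add: bilinear_prod_def module_hom_iff_linear)

lemma mult_simps:
  "mult x (a + b) = mult x a + mult x b"
  "mult x (scale c a) = scale c (mult x a)"
  "mult x 0 = 0" "mult x (- a) = - mult x a" "mult x (a - b) = mult x a - mult x b"
  "mult (a + b) y = mult a y + mult b y"
  "mult (scale c a) y = scale c (mult a y)"
  "mult 0 y = 0" "mult (- a) y = - mult a y" "mult (a - b) y = mult a y - mult b y"
  using module_hom.add[OF module_hom_mult_left] module_hom.scale[OF module_hom_mult_left]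
    module_hom.zero[OF module_hom_mult_left] module_hom.neg[OF module_hom_mult_left]
    module_hom.diff[OF module_hom_mult_left]
    module_hom.add[OF module_hom_mult_right] module_hom.scale[OF module_hom_mult_right]
    module_hom.zero[OF module_hom_mult_right] module_hom.neg[OF module_hom_mult_right]
    module_hom.diff[OF module_hom_mult_right]
  by auto

end

locale comm_assoc_algebra = bilinear_algebra +
  assumes mult_commute: "mult x y = mult y x"
    and mult_assoc: "mult (mult x y) z = mult x (mult y z)"
begin

text \<open>In the unitisation, (1 - u)(1 - v) = 1 - circle u v; quasi-inverses are inverses
for this associative operation with neutral element 0.\<close>
definition circle where
  "circle u v = u + v - mult u v"

lemma circle_assoc: "circle (circle u v) w = circle u (circle v w)"
  unfolding circle_def by (simp add: mult_simps mult_assoc algebra_simps)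

lemma quasi_regular_iff_circle: "quasi_regular mult y \<longleftrightarrow> (\<exists>z. circle y z = 0)"
  unfolding quasi_regular_def circle_def by (metis mult_commute)

lemma two_sided_ideal_iff:
  "two_sided_ideal scale mult I \<longleftrightarrow> subspace I \<and> (\<forall>x. \<forall>a\<in>I. mult x a \<in> I)"
  unfolding two_sided_ideal_def by (metis mult_commute)

definition quasi_regular_ideal where
  "quasi_regular_ideal I \<longleftrightarrow> two_sided_ideal scale mult I \<and> (\<forall>y\<in>I. quasi_regular mult y)"

lemma quasi_regular_ideal_subset_jacobson_radical:
  "quasi_regular_ideal I \<Longrightarrow> I \<subseteq> jacobson_radical scale mult"
  unfolding quasi_regular_ideal_def jacobson_radical_def by blast

lemma quasi_regular_ideal_sum:
  assumes I1: "quasi_regular_ideal I1" and I2: "quasi_regular_ideal I2"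
  shows "quasi_regular_ideal {x + y |x y. x \<in> I1 \<and> y \<in> I2}" (is "quasi_regular_ideal ?S")
proof -
  have sub1: "subspace I1" and sub2: "subspace I2"
    and mem1: "\<And>x a. a \<in> I1 \<Longrightarrow> mult x a \<in> I1" and mem2: "\<And>x a. a \<in> I2 \<Longrightarrow> mult x a \<in> I2"
    using I1 I2 by (auto simp: quasi_regular_ideal_def two_sided_ideal_iff)
  have "mult x u \<in> ?S" if "u \<in> ?S" for x u
    using that mem1 mem2 by (fastforce simp: mult_simps)
  then have ideal: "two_sided_ideal scale mult ?S"
    using subspace_sums[OF sub1 sub2] by (simp add: two_sided_ideal_iff)
  have "quasi_regular mult u" if "u \<in> ?S" for u
  proof -
    obtain p q where u: "u = p + q" "p \<in> I1" "q \<in> I2"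
      using \<open>u \<in> ?S\<close> by blast
    obtain p' where p': "circle p p' = 0"
      using I1 u(2) by (auto simp: quasi_regular_ideal_def quasi_regular_iff_circle)
    have "circle u p' = q - mult q p'"
      using p' u(1) unfolding circle_def by (simp add: mult_simps algebra_simps)
    moreover have "q - mult q p' \<in> I2"
      using u(3) mem2[OF u(3), of p'] sub2 by (metis subspace_diff mult_commute)
    then obtain q' where "circle (q - mult q p') q' = 0"
      using I2 by (auto simp: quasi_regular_ideal_def quasi_regular_iff_circle)
    ultimately have "circle u (circle p' q') = 0"
      by (simp add: circle_assoc[symmetric])
    then show ?thesis
      by (auto simp: quasi_regular_iff_circle)
  qed
  with ideal show ?thesis
    unfolding quasi_regular_ideal_def by blast
qed

lemma quasi_regular_ideal_jacobson_radical:
  "quasi_regular_ideal (jacobson_radical scale mult)" (is "quasi_regular_ideal ?J")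
proof -
  have cover: "\<exists>I. quasi_regular_ideal I \<and> y \<in> I" if "y \<in> ?J" for y
    using that unfolding quasi_regular_ideal_def jacobson_radical_def by blast
  have "quasi_regular_ideal {0}"
    by (auto simp: quasi_regular_ideal_def two_sided_ideal_def mult_simps quasi_regular_def)
  then have zero: "0 \<in> ?J"
    using quasi_regular_ideal_subset_jacobson_radical by blast
  have add: "x + y \<in> ?J" if "x \<in> ?J" "y \<in> ?J" for x y
    using cover[OF that(1)] cover[OF that(2)] quasi_regular_ideal_sum
      quasi_regular_ideal_subset_jacobson_radical by blast
  have closed: "scale c y \<in> ?J \<and> mult x y \<in> ?J \<and> quasi_regular mult y" if "y \<in> ?J" for c x y
    using cover[OF that] quasi_regular_ideal_subset_jacobson_radical
    unfolding quasi_regular_ideal_def two_sided_ideal_iff by (blast intro: subspace_scale)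
  have "subspace ?J"
    using zero add closed by (blast intro: subspaceI)
  with closed show ?thesis
    unfolding quasi_regular_ideal_def two_sided_ideal_iff by blast
qed

lemma subspace_jacobson_radical: "subspace (jacobson_radical scale mult)"
  using quasi_regular_ideal_jacobson_radical
  unfolding quasi_regular_ideal_def two_sided_ideal_def by blast

lemma mult_lpow_lpow: "mult (lpow mult y i) (lpow mult y j) = lpow mult y (i + j + 1)"
  by (induction i) (simp_all add: mult_assoc)

lemma lpow_mem_ideal: "two_sided_ideal scale mult I \<Longrightarrow> y \<in> I \<Longrightarrow> lpow mult y j \<in> I"
  by (induction j) (auto simp: two_sided_ideal_def)

lemma nilpotent_imp_quasi_regular:
  assumes "nilpotent_elem mult y"
  shows "quasi_regular mult y"
proof -
  obtain n where n: "lpow mult y n = 0"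
    using assms unfolding nilpotent_elem_def by blast
  let ?z = "\<lambda>N. - (\<Sum>k<N. lpow mult y k)"
  have "y + ?z N - mult y (?z N) = lpow mult y N" for N
    by (induction N) (simp_all add: mult_simps algebra_simps)
  then have "y + ?z n - mult y (?z n) = 0"
    using n by simp
  moreover have "mult (?z n) y = mult y (?z n)"
    by (rule mult_commute)
  ultimately have "y + ?z n - mult y (?z n) = 0 \<and> y + ?z n - mult (?z n) y = 0"
    by simp
  then show ?thesis
    unfolding quasi_regular_def by blast
qed

lemma jacobson_radical_nilpotent:
  assumes fd: "fin_dim scale" and y: "y \<in> jacobson_radical scale mult"
  shows "nilpotent_elem mult y"
proof -
  let ?J = "jacobson_radical scale mult" and ?p = "lpow mult y"
  obtain m where m: "?p m \<in> span (?p ` {m<..})"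
    using fin_dim_ex_mem_span_tail[OF fd] by blast
  have J: "two_sided_ideal scale mult ?J" "\<And>w. w \<in> ?J \<Longrightarrow> quasi_regular mult w"
    using quasi_regular_ideal_jacobson_radical unfolding quasi_regular_ideal_def by auto
  have "?p ` {m<..} \<subseteq> mult (?p m) ` ?J"
  proof
    fix u assume "u \<in> ?p ` {m<..}"
    then obtain k where "m < k" "u = ?p k" by blast
    then have "u = mult (?p m) (?p (k - m - 1))"
      by (simp add: mult_lpow_lpow)
    then show "u \<in> mult (?p m) ` ?J"
      using lpow_mem_ideal[OF J(1) y] by blast
  qed
  then have "span (?p ` {m<..}) \<subseteq> mult (?p m) ` ?J"
    by (rule span_minimal)
      (rule module_hom.subspace_image[OF module_hom_mult_left subspace_jacobson_radical])
  with m obtain w where w: "w \<in> ?J" "mult (?p m) w = ?p m"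
    by auto
  obtain z where z: "w + z - mult w z = 0"
    using J(2)[OF w(1)] unfolding quasi_regular_def by blast
  have "?p m = mult (?p m) w + mult (?p m) z - mult (mult (?p m) w) z"
    using w(2) by simp
  also have "\<dots> = mult (?p m) (w + z - mult w z)"
    by (simp add: mult_simps mult_assoc)
  also have "\<dots> = 0"
    using z by (simp add: mult_simps)
  finally show ?thesis
    unfolding nilpotent_elem_def by blast
qed

end

locale admissible_poisson_algebra = bilinear_algebra scale mult
  for scale :: "'k::field \<Rightarrow> 'v::ab_group_add \<Rightarrow> 'v" and mult +
  assumes char2: "(2::'k) \<noteq> 0" and char3: "(3::'k) \<noteq> 0"
    and admissible: "admissible_poisson scale mult"
begin

abbreviation sp where "sp \<equiv> sprod scale mult"
abbreviation br where "br \<equiv> pbracket scale mult"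

lemma scale_two: "scale 2 (v::'v) = v + v"
  using scale_left_distrib[of 1 1 v] by (simp only: one_add_one scale_one)

lemma scale_three: "scale 3 (v::'v) = v + v + v"
proof -
  have "scale (2 + 1) v = v + v + v"
    by (simp only: scale_left_distrib scale_two scale_one)
  then show ?thesis
    by simp
qed

lemma triple_eq_0_iff: "(v::'v) + v + v = 0 \<longleftrightarrow> v = 0"
proof -
  have "scale 3 v = 0 \<longleftrightarrow> v = 0"
    using char3 by simp
  then show ?thesis
    by (simp add: scale_three)
qed

abbreviation admissible_defect where
  "admissible_defect x y z \<equiv>
     (mult (mult x y) z - mult x (mult y z)) + (mult (mult x y) z - mult x (mult y z))
     + (mult (mult x y) z - mult x (mult y z))
     - (mult (mult x z) y + mult (mult y z) x - mult (mult y x) z - mult (mult z x) y)"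

lemma admissible_defect_eq_0: "admissible_defect x y z = 0"
proof -
  have "scale 3 (assoc mult x y z)
    = mult (mult x z) y + mult (mult y z) x - mult (mult y x) z - mult (mult z x) y"
    using admissible unfolding admissible_poisson_def by blast
  then show ?thesis
    by (simp add: assoc_def scale_three)
qed

lemmas expand_simps = mult_simps scale_right_distrib scale_right_diff_distrib

lemma sprod_commute: "sp x y = sp y x"
  by (simp add: sprod_def add.commute)

lemma pbracket_antisym: "br x y = - br y x"
  by (simp add: pbracket_def flip: scale_minus_right)

lemma pbracket_self: "br x x = 0"
  by (simp add: pbracket_def)

lemma mult_eq_sprod_add_pbracket: "mult x y = sp x y + br x y"
proof -
  have "sp x y + br x y = scale (1/2) (scale 2 (mult x y))"
    by (simp add: sprod_def pbracket_def scale_two algebra_simps flip: scale_right_distrib)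
  then show ?thesis
    using char2 by simp
qed

lemma sprod_assoc: "sp (sp x y) z = sp x (sp y z)"
proof -
  let ?P = "mult (mult x y) z + mult (mult y x) z + mult z (mult x y) + mult z (mult y x)"
  let ?Q = "mult x (mult y z) + mult x (mult z y) + mult (mult y z) x + mult (mult z y) x"
  have "(?P - ?Q) + (?P - ?Q) + (?P - ?Q)
      = admissible_defect x y z + admissible_defect x z y
        - admissible_defect z x y - admissible_defect z y x"
    by (simp add: algebra_simps)
  then have "?P = ?Q"
    by (simp add: admissible_defect_eq_0 triple_eq_0_iff)
  moreover have "sp (sp x y) z = scale (1/4) ?P" "sp x (sp y z) = scale (1/4) ?Q"
    by (simp_all add: sprod_def expand_simps add_ac)
  ultimately show ?thesis
    by simp
qed

lemma pbracket_sprod_leibniz: "br x (sp y z) = sp (br x y) z + sp y (br x z)"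
proof -
  let ?P = "mult x (mult y z) + mult x (mult z y) - mult (mult y z) x - mult (mult z y) x"
  let ?Q = "(mult (mult x y) z - mult (mult y x) z + mult z (mult x y) - mult z (mult y x))
    + (mult y (mult x z) - mult y (mult z x) + mult (mult x z) y - mult (mult z x) y)"
  have "(?P - ?Q) + (?P - ?Q) + (?P - ?Q)
      = - admissible_defect x y z - admissible_defect x z y + admissible_defect y x z
        - admissible_defect y z x + admissible_defect z x y - admissible_defect z y x"
    by (simp add: algebra_simps)
  then have "?P = ?Q"
    by (simp add: admissible_defect_eq_0 triple_eq_0_iff)
  moreover have "br x (sp y z) = scale (1/4) ?P" "sp (br x y) z + sp y (br x z) = scale (1/4) ?Q"
    by (simp_all add: sprod_def pbracket_def expand_simps add_ac)
  ultimately show ?thesis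
    by simp
qed

lemma module_hom_pbracket: "module_hom scale scale (br x)"
  by unfold_locales (simp_all add: pbracket_def expand_simps algebra_simps)

sublocale S: comm_assoc_algebra scale sp
proof unfold_locales
  have "module_hom scale scale (sp x)" for x
    by unfold_locales (simp_all add: sprod_def expand_simps algebra_simps)
  moreover have "(\<lambda>a. sp a y) = sp y" for y
    by (rule ext) (rule sprod_commute)
  ultimately show "bilinear_prod scale sp"
    by (simp add: bilinear_prod_def module_hom_iff_linear)
qed (fact sprod_commute sprod_assoc)+

lemma pbracket_lpow_self: "br y (lpow mult y n) = 0"
proof (induction n)
  case (Suc n)
  then have "lpow mult y (Suc n) = sp y (lpow mult y n)"
    using mult_eq_sprod_add_pbracket[of y "lpow mult y n"] by simp
  with Suc show ?case
    by (simp add: pbracket_sprod_leibniz pbracket_self S.mult_simps)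
qed (simp add: pbracket_self)

lemma lpow_mult_eq_lpow_sprod: "lpow mult y n = lpow sp y n"
proof (induction n)
  case (Suc n)
  have "lpow mult y (Suc n) = sp y (lpow mult y n)"
    using mult_eq_sprod_add_pbracket[of y "lpow mult y n"] by (simp add: pbracket_lpow_self)
  with Suc show ?case
    by simp
qed simp

lemma nilpotent_mult_iff_sprod: "nilpotent_elem mult y \<longleftrightarrow> nilpotent_elem sp y"
  by (simp add: nilpotent_elem_def lpow_mult_eq_lpow_sprod)

lemma two_sided_ideal_iff_sprod_pbracket:
  "two_sided_ideal scale mult I \<longleftrightarrow> two_sided_ideal scale sp I \<and> lie_ideal scale br I"
proof (cases "subspace I")
  case True
  have "(\<forall>x. \<forall>a\<in>I. mult x a \<in> I \<and> mult a x \<in> I)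
    \<longleftrightarrow> (\<forall>x. \<forall>a\<in>I. sp x a \<in> I \<and> sp a x \<in> I \<and> br x a \<in> I)"
  proof (intro iffI allI ballI conjI)
    fix x a assume "\<forall>x. \<forall>a\<in>I. mult x a \<in> I \<and> mult a x \<in> I" "a \<in> I"
    then show "sp x a \<in> I" "sp a x \<in> I" "br x a \<in> I"
      unfolding sprod_def pbracket_def
      by (auto intro: subspace_scale[OF True] subspace_add[OF True] subspace_diff[OF True])
  next
    fix x a assume "\<forall>x. \<forall>a\<in>I. sp x a \<in> I \<and> sp a x \<in> I \<and> br x a \<in> I" "a \<in> I"
    then have "sp x a \<in> I" "br x a \<in> I"
      by auto
    moreover have "mult a x = sp x a + - br x a"
      by (simp add: mult_eq_sprod_add_pbracket sprod_commute[of a] pbracket_antisym[of a])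
    ultimately show "mult x a \<in> I" "mult a x \<in> I"
      by (simp_all add: mult_eq_sprod_add_pbracket[of x a] subspace_add[OF True]
          subspace_diff[OF True])
  qed
  then show ?thesis
    using True unfolding two_sided_ideal_def lie_ideal_def by blast
qed (simp add: two_sided_ideal_def)

lemma largest_lie_ideal_in_sprod_closed:
  assumes L: "largest_lie_ideal_in scale br J L" and J: "two_sided_ideal scale sp J"
    and a: "a \<in> L"
  shows "sp x a \<in> L"
proof -
  let ?G = "L \<union> {sp u c |u c. c \<in> L}"
  have lie: "\<And>y c. c \<in> L \<Longrightarrow> br y c \<in> L"
    using L unfolding largest_lie_ideal_in_def lie_ideal_def by blast
  have "br y ` ?G \<subseteq> span ?G" for y
  proof
    fix v assume "v \<in> br y ` ?G"
    then obtain g where g: "g \<in> ?G" and v: "v = br y g"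
      by blast
    show "v \<in> span ?G"
    proof (cases "g \<in> L")
      case True
      then show ?thesis
        unfolding v using lie by (simp add: span_base)
    next
      case False
      then obtain u c where c: "c \<in> L" and g_eq: "g = sp u c"
        using g by blast
      have "sp (br y u) c \<in> ?G" "sp u (br y c) \<in> ?G"
        using c lie by blast+
      then show ?thesis
        unfolding v g_eq pbracket_sprod_leibniz by (intro span_add span_base)
    qed
  qed
  then have "lie_ideal scale br (span ?G)"
    by (rule lie_ideal_span[OF module_hom_pbracket])
  moreover have "span ?G \<subseteq> J"
  proof (rule span_minimal)
    show "?G \<subseteq> J"
      using L J unfolding largest_lie_ideal_in_def two_sided_ideal_def by blast
    show "subspace J"
      using J unfolding two_sided_ideal_def by blast
  qed
  ultimately have "span ?G \<subseteq> L"
    using L unfolding largest_lie_ideal_in_def by blast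
  then show ?thesis
    using a span_base[of "sp x a" ?G] by blast
qed

lemma largest_lie_ideal_in_jacobson_radical_is_nilradical:
  assumes fd: "fin_dim scale"
    and L: "largest_lie_ideal_in scale br (jacobson_radical scale sp) L"
  shows "is_nilradical scale mult L"
proof -
  let ?J = "jacobson_radical scale sp"
  have J: "two_sided_ideal scale sp ?J"
    using S.quasi_regular_ideal_jacobson_radical unfolding S.quasi_regular_ideal_def by blast
  have "lie_ideal scale br L" and "L \<subseteq> ?J"
    using L unfolding largest_lie_ideal_in_def by blast+
  then have "two_sided_ideal scale mult L"
    using largest_lie_ideal_in_sprod_closed[OF L J]
    by (simp add: two_sided_ideal_iff_sprod_pbracket S.two_sided_ideal_iff lie_ideal_def)
  moreover have "nilpotent_elem mult a" if "a \<in> L" for a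
    using S.jacobson_radical_nilpotent[OF fd] \<open>L \<subseteq> ?J\<close> that
    by (auto simp: nilpotent_mult_iff_sprod)
  moreover have "I \<subseteq> L" if I: "nil_ideal scale mult I" for I
  proof -
    have "S.quasi_regular_ideal I"
      using I S.nilpotent_imp_quasi_regular
      by (auto simp: nil_ideal_def S.quasi_regular_ideal_def two_sided_ideal_iff_sprod_pbracket
          nilpotent_mult_iff_sprod)
    then have "I \<subseteq> ?J"
      by (rule S.quasi_regular_ideal_subset_jacobson_radical)
    moreover have "lie_ideal scale br I"
      using I by (simp add: nil_ideal_def two_sided_ideal_iff_sprod_pbracket)
    ultimately show ?thesis
      using L unfolding largest_lie_ideal_in_def by blast
  qed
  ultimately show ?thesis
    unfolding is_nilradical_def nil_ideal_def by blast
qed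

end

theorem mainTheorem8:
  fixes scale :: "'k::field \<Rightarrow> 'v::ab_group_add \<Rightarrow> 'v"
    and mult :: "'v \<Rightarrow> 'v \<Rightarrow> 'v"
  assumes char2: "(2::'k) \<noteq> 0" and char3: "(3::'k) \<noteq> 0"
    and vs: "vector_space scale"
    and fd: "fin_dim scale"
    and bil: "bilinear_prod scale mult"
    and adm: "admissible_poisson scale mult"
  shows "\<exists>N. is_nilradical scale mult N \<and>
    largest_lie_ideal_in scale (pbracket scale mult)
      (jacobson_radical scale (sprod scale mult)) N"
proof -
  interpret admissible_poisson_algebra scale mult
    by (intro admissible_poisson_algebra.intro bilinear_algebra.intro
        admissible_poisson_algebra_axioms.intro bilinear_algebra_axioms.intro vs bil char2 char3 adm)
  obtain L where "largest_lie_ideal_in scale br (jacobson_radical scale sp) L"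
    using largest_lie_ideal_in_exists[where b = br, OF module_hom_pbracket S.subspace_jacobson_radical]
    by blast
  then show ?thesis
    using largest_lie_ideal_in_jacobson_radical_is_nilradical[OF fd] by blast
qed

end
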